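(* Let $M$ be a score distribution model in which a route can only distribute non-negative scores, i.e. $w_M(j,k)\ge 0$ for all $j,k$. Then for every road segment $s$ we have $s.\mathit{lb} \le s.\mathit{min}$ and $s.\mathit{ub} \ge s.\mathit{max}$, where $s.\mathit{min}=\min_{p\in s}\mathit{score}_M(p)$ and $s.\mathit{max}=\max_{p\in s}\mathit{score}_M(p)$.
   Context: A road network is a directed graph $G=(V,E)$ embedded in the plane: each vertex $v$ has a location $\mathit{loc}(v)\in\mathbb{R}^2$, and each edge $e=(v_i,v_j)$ has length $\|e\|$ equal to the Euclidean distance between $\mathit{loc}(v_i)$ and $\mathit{loc}(v_j)$. A network point is a pair $p=(\mathit{eid},d)$ where $\mathit{eid}$ identifies an edge $e=(v_i,v_j)$ and $d\in[0,1]$ is the ratio of the distance from $v_i$ to the point to $\|e\|$; $P$ denotes the set of all network points (so $V\subseteq P$). A road segment is a sequence $s=\langle p_1,\dots,p_n\rangle$, $n\ge 2$, with $p_1,p_n\in P$, $p_2,\dots,p_{n-1}\in V$, $p_1,p_2$ on the same edge, $p_{n-1},p_n$ on the same edge, and $(p_i,p_{i+1})\in E$ for $1<i<n-1$; a segment is identified with the set of network points it passes through. A facility $f$ is located at a network point $f.p$; $F$ is the set of facilities. A route usage object is $\mathit{ro}=(\mathit{rid},r,\mathit{count},\langle \mathit{usage}_1,\dots,\mathit{usage}_{\mathit{count}}\rangle)$ whose route $r$ is a road segment; $R$ is the set of route usage objects. A route $r$ covers a segment $s'$ if every point of $s'$ lies on $r$, and intersects $s'$ if some point of $s'$ lies on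 $r$. $s'.C$ (resp. $s'.I$) is the set of route usage objects whose routes cover (resp. intersect) $s'$; $s'.C\subseteq s'.I$. For a fixed threshold $\delta>0$, a facility $f$ attracts a route $r$ if the shortest network distance from $f.p$ to $r$ is at most $\delta$. Each route $r$ is assigned a score $\mathit{score}(r)\ge 0$ (e.g. $\mathit{score}(r)=\mathrm{length}(r)\sum_i \mathit{usage}_i$). A score distribution model $M$ distributes $\mathit{score}(r)$ over the subsegments of $r$: the facilities attracting $r$ partition $r$ into $k$ consecutive subsegments, and the $j$-th subsegment ($1\le j\le k$) receives $w_M(j,k)\cdot\mathit{score}(r)$. The score $\mathit{score}_M(p)$ of a network point $p$ is the sum, over all route usage objects whose route contains $p$, of the amount assigned by $M$ to the subsegment of that route containing $p$. For a segment $s$ and a route $r_i$ intersecting $s$, let $w_M(j_i,k_i)$ be the fraction of $\mathit{score}(r_i)$ assigned by $M$ to the $j_i$-th subsegment of $r_i$ (out of $k_i$) in which $s$ lies. The lower and upper bound scores of $s$ are $s.\mathit{lb}=\sum_{r_i\in s.C} w_M(j_i,k_i)\,\mathit{score}(r_i)$ and $s.\mathit{ub}=\sum_{r_i\in s.I} w_M(j_i,k_i)\,\mathit{score}(r_i)$; when facilities lie on $s$ so that $s$ meets several subsegments of a route, the lower bound uses the smallest and the upper bound the largest of the corresponding assigned values. *)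

theory Defs
  imports Complex_Main
begin

text \<open>
  Network points have an arbitrary type 'p; a road segment is
  identified with the set of network points it passes through. Route usage objects
  have an arbitrary type 'r; for a route usage object ro:
    route ro     : the set of network points of its route (a road segment),
    score ro     : score(r),
    nsub ro      : the number k of subsegments into which the facilities attracting
                   the route partition it,
    sub ro p     : the index j (1 <= j <= k) of the subsegment of the route containing p.
  A score distribution model M is given by its weight function w, w j k = w_M(j,k).
\<close>

definition covers :: "('r \<Rightarrow> 'p set) \<Rightarrow> 'r \<Rightarrow> 'p set \<Rightarrow> bool" where
  "covers route ro s \<longleftrightarrow> s \<subseteq> route ro"

definition intersects :: "('r \<Rightarrow> 'p set) \<Rightarrow> 'r \<Rightarrow> 'p set \<Rightarrow> bool" where
  "intersects route ro s \<longleftrightarrow> s \<inter> route ro \<noteq> {}"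

definition segC :: "'r set \<Rightarrow> ('r \<Rightarrow> 'p set) \<Rightarrow> 'p set \<Rightarrow> 'r set" where
  "segC R route s = {ro \<in> R. covers route ro s}"

definition segI :: "'r set \<Rightarrow> ('r \<Rightarrow> 'p set) \<Rightarrow> 'p set \<Rightarrow> 'r set" where
  "segI R route s = {ro \<in> R. intersects route ro s}"

definition assigned :: "(nat \<Rightarrow> nat \<Rightarrow> real) \<Rightarrow> ('r \<Rightarrow> real) \<Rightarrow> ('r \<Rightarrow> nat)
    \<Rightarrow> ('r \<Rightarrow> 'p \<Rightarrow> nat) \<Rightarrow> 'r \<Rightarrow> 'p \<Rightarrow> real" where
  "assigned w score nsub sub ro p = w (sub ro p) (nsub ro) * score ro"

definition score_M :: "(nat \<Rightarrow> nat \<Rightarrow> real) \<Rightarrow> 'r set \<Rightarrow> ('r \<Rightarrow> 'p set) \<Rightarrow> ('r \<Rightarrow> real)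
    \<Rightarrow> ('r \<Rightarrow> nat) \<Rightarrow> ('r \<Rightarrow> 'p \<Rightarrow> nat) \<Rightarrow> 'p \<Rightarrow> real" where
  "score_M w R route score nsub sub p =
     (\<Sum>ro \<in> {ro \<in> R. p \<in> route ro}. assigned w score nsub sub ro p)"

definition seg_lb :: "(nat \<Rightarrow> nat \<Rightarrow> real) \<Rightarrow> 'r set \<Rightarrow> ('r \<Rightarrow> 'p set) \<Rightarrow> ('r \<Rightarrow> real)
    \<Rightarrow> ('r \<Rightarrow> nat) \<Rightarrow> ('r \<Rightarrow> 'p \<Rightarrow> nat) \<Rightarrow> 'p set \<Rightarrow> real" where
  "seg_lb w R route score nsub sub s =
     (\<Sum>ro \<in> segC R route s. Min (assigned w score nsub sub ro ` (s \<inter> route ro)))"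

definition seg_ub :: "(nat \<Rightarrow> nat \<Rightarrow> real) \<Rightarrow> 'r set \<Rightarrow> ('r \<Rightarrow> 'p set) \<Rightarrow> ('r \<Rightarrow> real)
    \<Rightarrow> ('r \<Rightarrow> nat) \<Rightarrow> ('r \<Rightarrow> 'p \<Rightarrow> nat) \<Rightarrow> 'p set \<Rightarrow> real" where
  "seg_ub w R route score nsub sub s =
     (\<Sum>ro \<in> segI R route s. Max (assigned w score nsub sub ro ` (s \<inter> route ro)))"

definition seg_min :: "(nat \<Rightarrow> nat \<Rightarrow> real) \<Rightarrow> 'r set \<Rightarrow> ('r \<Rightarrow> 'p set) \<Rightarrow> ('r \<Rightarrow> real)
    \<Rightarrow> ('r \<Rightarrow> nat) \<Rightarrow> ('r \<Rightarrow> 'p \<Rightarrow> nat) \<Rightarrow> 'p set \<Rightarrow> real" where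
  "seg_min w R route score nsub sub s = Min (score_M w R route score nsub sub ` s)"

definition seg_max :: "(nat \<Rightarrow> nat \<Rightarrow> real) \<Rightarrow> 'r set \<Rightarrow> ('r \<Rightarrow> 'p set) \<Rightarrow> ('r \<Rightarrow> real)
    \<Rightarrow> ('r \<Rightarrow> nat) \<Rightarrow> ('r \<Rightarrow> 'p \<Rightarrow> nat) \<Rightarrow> 'p set \<Rightarrow> real" where
  "seg_max w R route score nsub sub s = Max (score_M w R route score nsub sub ` s)"

end

theory Submission
  imports Defs "HOL-Library.FuncSet"
begin

text \<open>
  Fix a point p of s. Every route covering s passes through p, and the smallest value it
  assigns on s is at most the value at p; dropping the non-negative contributions of the
  other routes through p then gives s.lb \<le> score_M(p). Dually, every route through p
  intersects s and contributes at most its largest value on s, and the remaining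
  intersecting routes only add non-negative amounts, so score_M(p) \<le> s.ub. Minimising and
  maximising over p yields the claim; the extrema exist because score_M takes only finitely
  many values, being determined by which subsegment of each of the finitely many routes
  contains p.
\<close>

lemma assigned_nonneg:
  assumes "\<And>j k. w j k \<ge> 0" and "score ro \<ge> 0"
  shows "assigned w score nsub sub ro p \<ge> 0"
  using assms by (simp add: assigned_def)

lemma finite_assigned_image:
  assumes "\<And>p. p \<in> route ro \<Longrightarrow> sub ro p \<in> {1..nsub ro}"
  shows "finite (assigned w score nsub sub ro ` (s \<inter> route ro))"
proof (rule finite_subset)
  show "assigned w score nsub sub ro ` (s \<inter> route ro)
          \<subseteq> (\<lambda>j. w j (nsub ro) * score ro) ` {1..nsub ro}"
    using assms by (auto simp: assigned_def)
qed auto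

lemma finite_score_M_image:
  assumes "finite R"
    and sub_range: "\<And>ro p. ro \<in> R \<Longrightarrow> p \<in> route ro \<Longrightarrow> sub ro p \<in> {1..nsub ro}"
  shows "finite (score_M w R route score nsub sub ` s)"
proof (rule finite_subset)
  \<comment> \<open>Index 0 marks routes not through p; genuine subsegment indices start at 1.\<close>
  define pos where "pos p = (\<lambda>ro\<in>R. if p \<in> route ro then sub ro p else 0)" for p
  define total where
    "total g = (\<Sum>ro \<in> {ro \<in> R. g ro \<noteq> 0}. w (g ro) (nsub ro) * score ro)" for g
  have routes_through: "{ro \<in> R. pos p ro \<noteq> 0} = {ro \<in> R. p \<in> route ro}" for p
    using sub_range by (force simp: pos_def)
  have "score_M w R route score nsub sub p = total (pos p)" for p
    unfolding total_def score_M_def assigned_def routes_through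
    by (auto intro!: sum.cong simp: pos_def)
  moreover have "pos p \<in> PiE R (\<lambda>ro. {0..nsub ro})" for p
    using sub_range by (auto simp: pos_def)
  ultimately show "score_M w R route score nsub sub ` s \<subseteq> total ` PiE R (\<lambda>ro. {0..nsub ro})"
    by auto
  show "finite (total ` PiE R (\<lambda>ro. {0..nsub ro}))"
    using \<open>finite R\<close> by (intro finite_imageI finite_PiE) auto
qed

lemma seg_lb_le_score_M:
  assumes "finite R" and "p \<in> s"
    and w_nonneg: "\<And>j k. w j k \<ge> 0"
    and score_nonneg: "\<And>ro. ro \<in> R \<Longrightarrow> score ro \<ge> 0"
    and sub_range: "\<And>ro p. ro \<in> R \<Longrightarrow> p \<in> route ro \<Longrightarrow> sub ro p \<in> {1..nsub ro}"
  shows "seg_lb w R route score nsub sub s \<le> score_M w R route score nsub sub p"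
proof -
  let ?a = "assigned w score nsub sub"
  have "seg_lb w R route score nsub sub s = (\<Sum>ro \<in> segC R route s. Min (?a ro ` (s \<inter> route ro)))"
    by (simp add: seg_lb_def)
  also have "\<dots> \<le> (\<Sum>ro \<in> segC R route s. ?a ro p)"
  proof (rule sum_mono)
    fix ro assume "ro \<in> segC R route s"
    then have "ro \<in> R" "p \<in> route ro"
      using \<open>p \<in> s\<close> by (auto simp: segC_def covers_def)
    then show "Min (?a ro ` (s \<inter> route ro)) \<le> ?a ro p"
      using \<open>p \<in> s\<close> sub_range by (intro Min_le finite_assigned_image) auto
  qed
  also have "\<dots> \<le> (\<Sum>ro \<in> {ro \<in> R. p \<in> route ro}. ?a ro p)"
    using \<open>finite R\<close> \<open>p \<in> s\<close> w_nonneg score_nonneg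
    by (intro sum_mono2 assigned_nonneg) (auto simp: segC_def covers_def)
  finally show ?thesis
    by (simp add: score_M_def)
qed

lemma score_M_le_seg_ub:
  assumes "finite R" and "p \<in> s"
    and w_nonneg: "\<And>j k. w j k \<ge> 0"
    and score_nonneg: "\<And>ro. ro \<in> R \<Longrightarrow> score ro \<ge> 0"
    and sub_range: "\<And>ro p. ro \<in> R \<Longrightarrow> p \<in> route ro \<Longrightarrow> sub ro p \<in> {1..nsub ro}"
  shows "score_M w R route score nsub sub p \<le> seg_ub w R route score nsub sub s"
proof -
  let ?a = "assigned w score nsub sub"
  have max_ge: "?a ro q \<le> Max (?a ro ` (s \<inter> route ro))"
    if "ro \<in> R" "q \<in> s \<inter> route ro" for ro q
    using that sub_range by (intro Max_ge finite_assigned_image) auto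
  have "score_M w R route score nsub sub p = (\<Sum>ro \<in> {ro \<in> R. p \<in> route ro}. ?a ro p)"
    by (simp add: score_M_def)
  also have "\<dots> \<le> (\<Sum>ro \<in> {ro \<in> R. p \<in> route ro}. Max (?a ro ` (s \<inter> route ro)))"
    using \<open>p \<in> s\<close> by (intro sum_mono max_ge) auto
  also have "\<dots> \<le> (\<Sum>ro \<in> segI R route s. Max (?a ro ` (s \<inter> route ro)))"
  proof (rule sum_mono2)
    show "finite (segI R route s)"
      using \<open>finite R\<close> by (simp add: segI_def)
    show "{ro \<in> R. p \<in> route ro} \<subseteq> segI R route s"
      using \<open>p \<in> s\<close> by (auto simp: segI_def intersects_def)
    fix ro assume "ro \<in> segI R route s - {ro \<in> R. p \<in> route ro}"
    then obtain q where "ro \<in> R" "q \<in> s \<inter> route ro"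
      by (auto simp: segI_def intersects_def)
    then show "0 \<le> Max (?a ro ` (s \<inter> route ro))"
      using max_ge[of ro q] assigned_nonneg[of w score ro nsub sub q] w_nonneg score_nonneg
      by fastforce
  qed
  finally show ?thesis
    by (simp add: seg_ub_def)
qed

theorem lemma2:
  fixes w :: "nat \<Rightarrow> nat \<Rightarrow> real"
    and R :: "'r set" and route :: "'r \<Rightarrow> 'p set"
    and score :: "'r \<Rightarrow> real" and nsub :: "'r \<Rightarrow> nat" and sub :: "'r \<Rightarrow> 'p \<Rightarrow> nat"
    and s :: "'p set"
  assumes finR: "finite R"
    and w_nonneg: "\<And>j k. w j k \<ge> 0"
    and score_nonneg: "\<And>ro. ro \<in> R \<Longrightarrow> score ro \<ge> 0"
    and sub_range: "\<And>ro p. ro \<in> R \<Longrightarrow> p \<in> route ro \<Longrightarrow> sub ro p \<in> {1..nsub ro}"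
    and s_nonempty: "s \<noteq> {}"
  shows "seg_lb w R route score nsub sub s \<le> seg_min w R route score nsub sub s
       \<and> seg_ub w R route score nsub sub s \<ge> seg_max w R route score nsub sub s"
proof -
  have "finite (score_M w R route score nsub sub ` s)"
    using finR sub_range by (rule finite_score_M_image)
  moreover note seg_lb_le_score_M[OF finR _ w_nonneg score_nonneg sub_range]
    and score_M_le_seg_ub[OF finR _ w_nonneg score_nonneg sub_range]
  ultimately show ?thesis
    unfolding seg_min_def seg_max_def
    using s_nonempty by (auto simp: Min_ge_iff Max_le_iff)
qed

end
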